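(* Let $M=(S,s_0,\mathbf{P})$ be a DTMC satisfying the standing assumptions below and let $p\in(0,1]$ with $p>\Pr_{s_0}(\lozenge\mathit{error})$. Then every $p$-prima facie cause $C\subseteq S$ of $\lozenge\mathit{error}$ induces a state-based $p$-cause; namely, $Q:=C\cup\{\mathit{error}\}\subseteq S_p$ and $\Pi=\{s_0\cdots s_n\in\operatorname{Paths}_{\operatorname{fin}}(M)\mid s_n\in Q,\ s_i\notin Q \text{ for all } i<n\}$ is a state-based $p$-cause for $\lozenge\mathit{error}$ in $M$.
   Context: A DTMC $M=(S,s_0,\mathbf{P})$ has a finite state set $S$, initial state $s_0$, and transition function $\mathbf{P}\colon S\times S\to[0,1]$ with rows summing to $1$. Finite/infinite paths are state sequences from $s_0$ along positive-probability transitions, with the standard cylinder-set probability measure on infinite paths; $\Pr_s(\lozenge X)$ is the probability of eventually reaching $X$ from $s$. Standing assumptions: every state is reached from $s_0$ with positive probability; there are states $\mathit{error},\mathit{safe}$ with $\Pr_{\mathit{safe}}(\lozenge\mathit{error})=0$, $\mathit{safe}$ being the unique state from which $\mathit{error}$ is unreachable, so $\Pr_{s_0}(\lozenge\{\mathit{error},\mathit{safe}\})=1$. Let $S_p=\{s\mid\Pr_s(\lozenge\mathit{error})\ge p\}$. A $p$-cause for $\lozenge\mathit{error}$ in $M$ is a prefix-free set $\Pi$ of finite paths (no element has a proper prefix in $\Pi$) such that almost every infinite path visiting $\mathit{error}$ has a prefix in $\Pi$ and every element of $\Pi$ ends in a state of $S_p$. A $p$-cause $\Pi$ is state-based if there is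 $Q\subseteq S_p$ with $\Pi=\{s_0\cdots s_n\in\operatorname{Paths}_{\operatorname{fin}}(M)\mid s_n\in Q,\ s_i\notin Q\ \forall i<n\}$. A set $C\subseteq S$ is a $p$-prima facie cause of $\lozenge\mathit{error}$ if (1) $C$ is reachable from $s_0$ and $\mathit{error}\notin C$, (2) $\Pr_s(\lozenge\mathit{error})\ge p$ for all $s\in C$, and (3) $\Pr_{s_0}(\lozenge\mathit{error})<p$. *)

theory Defs
  imports "HOL-Probability.Probability" "HOL-Library.Linear_Temporal_Logic_on_Streams"
    "HOL-Library.Sublist"
begin

text \<open>A DTMC over the finite state type 's is given by its transition kernel
  K :: 's => 's pmf (so P(s,t) = pmf (K s) t) and an initial state s0.
  Infinite paths are streams of states; the path measure from state s is built,
  as usual, from i.i.d. choices omega i s ~ K s, the path being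
  s, omega 0 s, omega 1 (omega 0 s), ...\<close>

fun walk_fun :: "'s \<Rightarrow> (nat \<Rightarrow> 's \<Rightarrow> 's) \<Rightarrow> nat \<Rightarrow> 's" where
  "walk_fun s \<omega> 0 = s"
| "walk_fun s \<omega> (Suc n) = \<omega> n (walk_fun s \<omega> n)"

definition path_measure :: "('s \<Rightarrow> 's pmf) \<Rightarrow> 's \<Rightarrow> 's stream measure" where
  "path_measure K s =
     distr (\<Pi>\<^sub>M i\<in>(UNIV::nat set). \<Pi>\<^sub>M t\<in>(UNIV::'s set). measure_pmf (K t))
           (stream_space (count_space UNIV))
           (\<lambda>\<omega>. smap (walk_fun s \<omega>) nats)"

definition Pr_ev :: "('s \<Rightarrow> 's pmf) \<Rightarrow> 's \<Rightarrow> 's set \<Rightarrow> real" where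
  "Pr_ev K s X = measure (path_measure K s) {\<omega> \<in> space (path_measure K s). ev (HLD X) \<omega>}"

definition fin_path :: "('s \<Rightarrow> 's pmf) \<Rightarrow> 's \<Rightarrow> 's list \<Rightarrow> bool" where
  "fin_path K s0 xs \<longleftrightarrow> xs \<noteq> [] \<and> hd xs = s0 \<and>
     (\<forall>i. Suc i < length xs \<longrightarrow> pmf (K (xs ! i)) (xs ! Suc i) > 0)"

definition S_p :: "('s \<Rightarrow> 's pmf) \<Rightarrow> 's \<Rightarrow> real \<Rightarrow> 's set" where
  "S_p K err p = {s. Pr_ev K s {err} \<ge> p}"

definition standing_assms :: "('s::finite \<Rightarrow> 's pmf) \<Rightarrow> 's \<Rightarrow> 's \<Rightarrow> 's \<Rightarrow> bool" where
  "standing_assms K s0 err safe \<longleftrightarrow>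
     (\<forall>s. \<exists>xs. fin_path K s0 xs \<and> last xs = s) \<and>
     Pr_ev K safe {err} = 0 \<and>
     (\<forall>s. Pr_ev K s {err} = 0 \<longrightarrow> s = safe)"

definition prefix_free :: "'s list set \<Rightarrow> bool" where
  "prefix_free Pc \<longleftrightarrow> (\<forall>\<sigma>\<in>Pc. \<forall>\<tau>\<in>Pc. \<not> strict_prefix \<tau> \<sigma>)"

definition is_p_cause :: "('s \<Rightarrow> 's pmf) \<Rightarrow> 's \<Rightarrow> 's \<Rightarrow> real \<Rightarrow> 's list set \<Rightarrow> bool" where
  "is_p_cause K s0 err p Pc \<longleftrightarrow>
     (\<forall>\<sigma>\<in>Pc. fin_path K s0 \<sigma>) \<and> prefix_free Pc \<and>
     (AE \<omega> in path_measure K s0. ev (HLD {err}) \<omega> \<longrightarrow> (\<exists>n. stake (Suc n) \<omega> \<in> Pc)) \<and>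
     (\<forall>\<sigma>\<in>Pc. last \<sigma> \<in> S_p K err p)"

definition first_hit_paths :: "('s \<Rightarrow> 's pmf) \<Rightarrow> 's \<Rightarrow> 's set \<Rightarrow> 's list set" where
  "first_hit_paths K s0 Q = {xs. fin_path K s0 xs \<and> last xs \<in> Q \<and>
       (\<forall>i < length xs - 1. xs ! i \<notin> Q)}"

definition state_based_p_cause :: "('s \<Rightarrow> 's pmf) \<Rightarrow> 's \<Rightarrow> 's \<Rightarrow> real \<Rightarrow> 's list set \<Rightarrow> bool" where
  "state_based_p_cause K s0 err p Pc \<longleftrightarrow>
     is_p_cause K s0 err p Pc \<and> (\<exists>Q \<subseteq> S_p K err p. Pc = first_hit_paths K s0 Q)"

definition prima_facie_cause :: "('s \<Rightarrow> 's pmf) \<Rightarrow> 's \<Rightarrow> 's \<Rightarrow> real \<Rightarrow> 's set \<Rightarrow> bool" where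
  "prima_facie_cause K s0 err p C \<longleftrightarrow>
     (\<exists>xs. fin_path K s0 xs \<and> last xs \<in> C) \<and> err \<notin> C \<and>
     (\<forall>s\<in>C. Pr_ev K s {err} \<ge> p) \<and>
     Pr_ev K s0 {err} < p"

end

theory Submission
  imports Defs
begin

text \<open>The error state reaches itself with probability 1 \<ge> p, so Q = C \<union> {error}
  lies in S_p by condition (2) of a prima facie cause.  For any Q \<subseteq> S_p containing error, the first-hit paths of Q
  are prefix-free, since a strict prefix would already end in Q, and almost every
  path reaching error has its prefix up to the first visit of Q among them: almost
  surely every transition taken has positive probability, so that prefix is a
  finite path from s0.\<close>

abbreviation choice_space :: "('s \<Rightarrow> 's pmf) \<Rightarrow> (nat \<Rightarrow> 's \<Rightarrow> 's) measure" where
  "choice_space K \<equiv> \<Pi>\<^sub>M i\<in>(UNIV::nat set). \<Pi>\<^sub>M t\<in>(UNIV::'s set). measure_pmf (K t)"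

lemma measurable_walk_fun:
  fixes K :: "'s::countable \<Rightarrow> 's pmf"
  shows "(\<lambda>\<omega>. walk_fun s \<omega> n) \<in> choice_space K \<rightarrow>\<^sub>M count_space UNIV"
proof (induction n)
  case 0
  then show ?case by simp
next
  case (Suc n)
  have "(\<lambda>\<omega>. \<omega> n a) \<in> choice_space K \<rightarrow>\<^sub>M count_space UNIV" for a :: 's
  proof -
    have "(\<lambda>\<omega>. \<omega> n a) \<in> choice_space K \<rightarrow>\<^sub>M measure_pmf (K a)"
      by (rule measurable_compose[where f="\<lambda>\<omega>. \<omega> n" and g="\<lambda>\<omega>. \<omega> a"];
          rule measurable_component_singleton) auto
    then show ?thesis
      by (simp add: measurable_cong_sets)
  qed
  then have "(\<lambda>\<omega>. (\<lambda>a \<omega>. \<omega> n a) (walk_fun s \<omega> n) \<omega>) \<in> choice_space K \<rightarrow>\<^sub>M count_space UNIV"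
    by (rule measurable_compose_countable'[OF _ Suc]) simp_all
  then show ?case
    by simp
qed

lemma measurable_walk_stream:
  fixes K :: "'s::countable \<Rightarrow> 's pmf"
  shows "(\<lambda>\<omega>. smap (walk_fun s \<omega>) nats) \<in> choice_space K \<rightarrow>\<^sub>M stream_space (count_space UNIV)"
  by (rule measurable_stream_space2) (simp add: measurable_walk_fun)

lemma prob_space_path_measure:
  fixes K :: "'s::countable \<Rightarrow> 's pmf"
  shows "prob_space (path_measure K s)"
  unfolding path_measure_def
  by (intro prob_space.prob_space_distr prob_space_PiM prob_space_measure_pmf measurable_walk_stream)

lemma sets_path_measure: "sets (path_measure K s) = sets (stream_space (count_space UNIV))"
  and space_path_measure: "space (path_measure K s) = space (stream_space (count_space UNIV))"
  by (simp_all add: path_measure_def)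

lemma AE_choice_space_positive:
  fixes K :: "'s::countable \<Rightarrow> 's pmf"
  shows "AE \<omega> in choice_space K. \<forall>i a. pmf (K a) (\<omega> i a) > 0"
proof -
  have "AE \<omega> in choice_space K. pmf (K a) (\<omega> i a) > 0" for i a
  proof -
    have "AE x in measure_pmf (K a). pmf (K a) x > 0"
      using AE_measure_pmf[of "K a"] by eventually_elim (simp add: pmf_positive)
    then have "AE \<omega> in \<Pi>\<^sub>M t\<in>(UNIV::'s set). measure_pmf (K t). pmf (K a) (\<omega> a) > 0"
      by (intro AE_PiM_component prob_space_measure_pmf) auto
    then show ?thesis
      by (intro AE_PiM_component[where P="\<lambda>\<omega>. pmf (K a) (\<omega> a) > 0"]
          prob_space_PiM prob_space_measure_pmf) auto
  qed
  then show ?thesis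
    by (simp add: AE_all_countable)
qed

lemma AE_path_measure_positive_steps:
  fixes K :: "'s::countable \<Rightarrow> 's pmf"
  shows "AE x in path_measure K s. shd x = s \<and> (\<forall>i. pmf (K (x !! i)) (x !! Suc i) > 0)"
proof -
  have "Measurable.pred (stream_space (count_space UNIV))
          (\<lambda>x. shd x = s \<and> (\<forall>i. pmf (K (x !! i)) (x !! Suc i) > 0))"
    by measurable
  with AE_choice_space_positive[of K] show ?thesis
    unfolding path_measure_def
    by (subst AE_distr_iff[OF measurable_walk_stream]) (auto simp: pred_def elim!: AE_mp)
qed

lemma ev_HLD_iff_snth: "ev (HLD X) \<omega> \<longleftrightarrow> (\<exists>n. \<omega> !! n \<in> X)"
  by (simp add: ev_iff_sdrop HLD_iff)

lemma Pr_ev_self: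
  fixes K :: "'s::countable \<Rightarrow> 's pmf"
  shows "Pr_ev K s {s} = 1"
proof -
  interpret prob_space "path_measure K s"
    by (rule prob_space_path_measure)
  have "{\<omega> \<in> space (path_measure K s). ev (HLD {s}) \<omega>} \<in> sets (path_measure K s)"
    unfolding sets_path_measure space_path_measure by measurable
  moreover have "AE \<omega> in path_measure K s. ev (HLD {s}) \<omega>"
    using AE_path_measure_positive_steps[where K=K and s=s]
    by eventually_elim (auto simp: ev_HLD_iff_snth intro: exI[of _ 0])
  ultimately show ?thesis
    unfolding Pr_ev_def by (simp add: prob_Collect_eq_1)
qed

lemma prefix_free_first_hit_paths: "prefix_free (first_hit_paths K s0 Q)"
  unfolding prefix_free_def
proof (intro ballI notI)
  fix \<sigma> \<tau>
  assume \<sigma>: "\<sigma> \<in> first_hit_paths K s0 Q" and \<tau>: "\<tau> \<in> first_hit_paths K s0 Q"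
    and "strict_prefix \<tau> \<sigma>"
  then obtain r where r: "\<sigma> = \<tau> @ r" "r \<noteq> []"
    by (auto simp: strict_prefix_def prefix_def)
  have "\<tau> \<noteq> []"
    using \<tau> by (simp add: first_hit_paths_def fin_path_def)
  with r have "last \<tau> = \<sigma> ! (length \<tau> - 1)" and "length \<tau> - 1 < length \<sigma> - 1"
    by (simp_all add: last_conv_nth nth_append less_diff_conv)
  with \<sigma> \<tau> show False
    by (auto simp: first_hit_paths_def)
qed

lemma stake_first_hit_in_first_hit_paths:
  assumes "shd \<omega> = s0" and "\<forall>i. pmf (K (\<omega> !! i)) (\<omega> !! Suc i) > 0"
    and "\<exists>m. \<omega> !! m \<in> Q"
  shows "stake (Suc (LEAST m. \<omega> !! m \<in> Q)) \<omega> \<in> first_hit_paths K s0 Q"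
proof -
  define n where "n = (LEAST m. \<omega> !! m \<in> Q)"
  have "\<omega> !! n \<in> Q"
    unfolding n_def using assms(3) by (rule LeastI_ex)
  moreover have "\<omega> !! i \<notin> Q" if "i < n" for i
    using not_less_Least that unfolding n_def by blast
  ultimately show ?thesis
    using assms(1,2) unfolding n_def [symmetric] first_hit_paths_def fin_path_def
    by (auto simp: hd_conv_nth last_conv_nth simp del: stake.simps)
qed

lemma AE_reach_imp_first_hit_prefix:
  fixes K :: "'s::countable \<Rightarrow> 's pmf"
  assumes "X \<subseteq> Q"
  shows "AE \<omega> in path_measure K s0. ev (HLD X) \<omega> \<longrightarrow>
           (\<exists>n. stake (Suc n) \<omega> \<in> first_hit_paths K s0 Q)"
  using AE_path_measure_positive_steps[where K=K and s=s0]
proof eventually_elim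
  case (elim \<omega>)
  show ?case
  proof
    assume "ev (HLD X) \<omega>"
    with assms have "\<exists>m. \<omega> !! m \<in> Q"
      by (auto simp: ev_HLD_iff_snth)
    with elim show "\<exists>n. stake (Suc n) \<omega> \<in> first_hit_paths K s0 Q"
      by (blast intro: stake_first_hit_in_first_hit_paths)
  qed
qed

lemma state_based_p_cause_first_hit_paths:
  fixes K :: "'s::countable \<Rightarrow> 's pmf"
  assumes "Q \<subseteq> S_p K err p" and "err \<in> Q"
  shows "state_based_p_cause K s0 err p (first_hit_paths K s0 Q)"
proof -
  have "is_p_cause K s0 err p (first_hit_paths K s0 Q)"
    unfolding is_p_cause_def
  proof (intro conjI ballI prefix_free_first_hit_paths AE_reach_imp_first_hit_prefix)
    show "{err} \<subseteq> Q"
      using assms(2) by simp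
  next
    fix \<sigma>
    assume "\<sigma> \<in> first_hit_paths K s0 Q"
    then show "fin_path K s0 \<sigma>" and "last \<sigma> \<in> S_p K err p"
      using assms(1) by (auto simp: first_hit_paths_def)
  qed
  with assms(1) show ?thesis
    unfolding state_based_p_cause_def by blast
qed

theorem lemma2:
  fixes K :: "'s::finite \<Rightarrow> 's pmf" and s0 err safe :: 's and p :: real and C :: "'s set"
  assumes "standing_assms K s0 err safe"
    and "0 < p" and "p \<le> 1" and "p > Pr_ev K s0 {err}"
    and "prima_facie_cause K s0 err p C"
  shows "C \<union> {err} \<subseteq> S_p K err p
    \<and> state_based_p_cause K s0 err p (first_hit_paths K s0 (C \<union> {err}))"
proof -
  have "C \<union> {err} \<subseteq> S_p K err p"
    using assms(3,5) Pr_ev_self[of K err]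
    by (auto simp: S_p_def prima_facie_cause_def)
  with state_based_p_cause_first_hit_paths[of "C \<union> {err}" K err p s0] show ?thesis
    by simp
qed

end
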